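(* Let $A\in\mathbb{C}^{2^n\times 2^n}$. The local $C$-numerical range $W_{\mathrm{loc}}(C,A)$ is rotationally symmetric for all $C\in\mathbb{C}^{2^n\times 2^n}$ if and only if there exist $U\in SU_{\mathrm{loc}}(2^n)$, $\Delta\in\mathfrak{t}_{\mathrm{loc}}$ and $\varphi\in\mathbb{R}$, $\varphi\neq 0$, such that $[\Delta,UAU^\dagger]=i\varphi\,UAU^\dagger$.
   Context: $SU_{\mathrm{loc}}(2^n)=\{U_1\otimes\cdots\otimes U_n\mid U_k\in SU(2)\}$. $W_{\mathrm{loc}}(C,A)=\{\mathrm{tr}(C^\dagger UAU^\dagger)\mid U\in SU_{\mathrm{loc}}(2^n)\}$. A subset $W\subset\mathbb{C}$ is rotationally symmetric if $e^{i\varphi}W=W$ for all $\varphi\in\mathbb{R}$. $\mathfrak{t}_{\mathrm{loc}}$ is the set of diagonal matrices in the Lie algebra of $SU_{\mathrm{loc}}(2^n)$, i.e. all matrices $\sum_{j=1}^n I_2\otimes\cdots\otimes I_2\otimes\mathrm{diag}(i\lambda_j,-i\lambda_j)\otimes I_2\otimes\cdots\otimes I_2$ (the diagonal factor in the $j$-th position) with $\lambda_j\in\mathbb{R}$. $[X,Y]=XY-YX$. *)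

theory Defs
  imports Complex_Main "Jordan_Normal_Form.Determinant"
begin

definition mtrace :: "complex mat \<Rightarrow> complex" where
  "mtrace M = (\<Sum>i<dim_row M. M $$ (i, i))"

definition adj :: "complex mat \<Rightarrow> complex mat" where
  "adj M = mat (dim_col M) (dim_row M) (\<lambda>(i, j). cnj (M $$ (j, i)))"

definition kron :: "complex mat \<Rightarrow> complex mat \<Rightarrow> complex mat" where
  "kron A B = mat (dim_row A * dim_row B) (dim_col A * dim_col B)
     (\<lambda>(i, j). A $$ (i div dim_row B, j div dim_col B) * B $$ (i mod dim_row B, j mod dim_col B))"

definition tensor_list :: "complex mat list \<Rightarrow> complex mat" where
  "tensor_list Us = foldr kron Us (1\<^sub>m 1)"

definition SU2 :: "complex mat set" where
  "SU2 = {U. U \<in> carrier_mat 2 2 \<and> adj U * U = 1\<^sub>m 2 \<and> det U = 1}"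

definition SU_loc :: "nat \<Rightarrow> complex mat set" where
  "SU_loc n = {tensor_list Us | Us. length Us = n \<and> (\<forall>U \<in> set Us. U \<in> SU2)}"

definition W_loc :: "nat \<Rightarrow> complex mat \<Rightarrow> complex mat \<Rightarrow> complex set" where
  "W_loc n C A = {mtrace (adj C * (U * A * adj U)) | U. U \<in> SU_loc n}"

definition rot_symmetric :: "complex set \<Rightarrow> bool" where
  "rot_symmetric W \<longleftrightarrow> (\<forall>\<phi>::real. (\<lambda>z. cis \<phi> * z) ` W = W)"

definition diag_su2 :: "real \<Rightarrow> complex mat" where
  "diag_su2 l = mat 2 2 (\<lambda>(a, b). if a = b then (if a = 0 then \<i> * of_real l else - \<i> * of_real l) else 0)"

definition local_diag :: "nat \<Rightarrow> nat \<Rightarrow> real \<Rightarrow> complex mat" where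
  "local_diag n j l = tensor_list ((replicate n (1\<^sub>m 2))[j := diag_su2 l])"

(* t_loc: diagonal matrices in the Lie algebra of SU_loc(2^n) *)
definition t_loc :: "nat \<Rightarrow> complex mat set" where
  "t_loc n = {foldr (+) (map (\<lambda>j. local_diag n j (lam j)) [0..<n]) (0\<^sub>m (2^n) (2^n)) | lam. True}"

end

theory Submission
  imports Defs
begin

(* If \<Delta> = i diag(s) and [\<Delta>, B] = i \<phi> B for B = U A U\<^sup>\<dagger>, then B is supported on the entries (k, l)
   with s k - s l = \<phi>, so conjugation by the local diagonal unitary exp (t \<Delta>) multiplies B by e^(i t \<phi>).
   Hence A is mapped to e^(i \<psi>) A by a local unitary for every \<psi>, and every W_loc(C, A) is invariant
   under all rotations.

   Conversely, for C = e^(i \<theta>) A the rotated range contains tr(A\<^sup>\<dagger> A); by the equality case of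
   Cauchy-Schwarz some local U satisfies U A U\<^sup>\<dagger> = e^(i \<theta>) A. Diagonalizing the factors of U in a
   local frame V yields bounded phases p with p k - p l = \<theta> modulo 2\<pi> on the support of V A V\<^sup>\<dagger>.
   The offsets (p k - p l - \<theta>) / 2\<pi> are integers from a finite range, so two different angles
   \<theta>\<^sub>1, \<theta>\<^sub>2 (with frames V\<^sub>1, V\<^sub>2) produce the same support and the same offsets; the difference
   of their phase functions is an element \<Delta> of t_loc with [\<Delta>, V\<^sub>1 A V\<^sub>1\<^sup>\<dagger>] = i (\<theta>\<^sub>1 - \<theta>\<^sub>2) V\<^sub>1 A V\<^sub>1\<^sup>\<dagger>. *)

lemma index_mult_mat_sum:
  assumes "i < dim_row A" "j < dim_col B" "dim_col A = dim_row B"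
  shows "(A * B) $$ (i, j) = (\<Sum>k<dim_row B. A $$ (i, k) * B $$ (k, j))"
  using assms by (simp add: index_mult_mat scalar_prod_def lessThan_atLeast0)

lemma sum_lessThan_mult_split:
  fixes g :: "nat \<Rightarrow> 'a::comm_monoid_add"
  assumes "b > 0"
  shows "(\<Sum>t<a * b. g t) = (\<Sum>s<a. \<Sum>r<b. g (s * b + r))"
proof -
  have "(\<Sum>t<a * b. g t) = (\<Sum>s<a. sum g {s * b..<s * b + b})"
    by (rule sum.nat_group[symmetric])
  also have "\<dots> = (\<Sum>s<a. \<Sum>r<b. g (s * b + r))"
  proof (rule sum.cong[OF refl])
    fix s
    have "sum g {0 + s * b..<b + s * b} = (\<Sum>r = 0..<b. g (r + s * b))"
      by (rule sum.shift_bounds_nat_ivl)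
    then show "sum g {s * b..<s * b + b} = (\<Sum>r<b. g (s * b + r))"
      by (simp add: lessThan_atLeast0 add.commute)
  qed
  finally show ?thesis .
qed

(* Unlike mult_carrier_mat, this form is usable by simp: no dimension occurs only in the premises. *)
lemma mult_carrier_square: "A \<in> carrier_mat N N \<Longrightarrow> B \<in> carrier_mat N N \<Longrightarrow> A * B \<in> carrier_mat N N"
  by (rule mult_carrier_mat)

subsection \<open>Adjoints, traces and conjugation\<close>

lemma adj_dims [simp]: "dim_row (adj A) = dim_col A" "dim_col (adj A) = dim_row A"
  by (auto simp: adj_def)

lemma index_adj [simp]: "i < dim_col A \<Longrightarrow> j < dim_row A \<Longrightarrow> adj A $$ (i, j) = cnj (A $$ (j, i))"
  by (simp add: adj_def)

lemma adj_carrier: "A \<in> carrier_mat m k \<Longrightarrow> adj A \<in> carrier_mat k m"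
  by auto

lemma adj_adj [simp]: "adj (adj A) = A"
  by (rule eq_matI) auto

lemma adj_one [simp]: "adj (1\<^sub>m n) = 1\<^sub>m n"
  by (rule eq_matI) auto

lemma adj_smult: "adj (c \<cdot>\<^sub>m M) = cnj c \<cdot>\<^sub>m adj M"
  by (rule eq_matI) auto

lemma adj_mult: "A \<in> carrier_mat m k \<Longrightarrow> B \<in> carrier_mat k p \<Longrightarrow> adj (A * B) = adj B * adj A"
  by (rule eq_matI) (auto simp: index_mult_mat_sum mult.commute simp del: index_mult_mat(1))

lemma mtrace_mult:
  assumes "P \<in> carrier_mat N N" "Q \<in> carrier_mat N N"
  shows "mtrace (P * Q) = (\<Sum>i<N. \<Sum>k<N. P $$ (i, k) * Q $$ (k, i))"
  unfolding mtrace_def using assms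
  by (simp del: index_mult_mat(1), intro sum.cong refl) (simp add: index_mult_mat_sum del: index_mult_mat(1))

lemma mtrace_mult_commute:
  assumes "P \<in> carrier_mat N N" "Q \<in> carrier_mat N N"
  shows "mtrace (P * Q) = mtrace (Q * P)"
  using assms by (simp add: mtrace_mult[of _ N], subst sum.swap, simp add: mult.commute)

lemma mtrace_adj_mult:
  assumes "M \<in> carrier_mat N N" "K \<in> carrier_mat N N"
  shows "mtrace (adj M * K) = (\<Sum>i<N. \<Sum>k<N. cnj (M $$ (k, i)) * K $$ (k, i))"
  using assms by (simp add: mtrace_mult[of _ N] adj_carrier)

lemma mtrace_adj_mult_swap:
  "M \<in> carrier_mat N N \<Longrightarrow> K \<in> carrier_mat N N \<Longrightarrow> mtrace (adj K * M) = cnj (mtrace (adj M * K))"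
  by (simp add: mtrace_adj_mult mult.commute)

lemma mtrace_adj_mult_smult:
  "C \<in> carrier_mat N N \<Longrightarrow> M \<in> carrier_mat N N \<Longrightarrow>
   mtrace (adj C * (c \<cdot>\<^sub>m M)) = c * mtrace (adj C * M)"
  by (simp add: mtrace_adj_mult sum_distrib_left algebra_simps)

lemma mtrace_smult: "M \<in> carrier_mat N N \<Longrightarrow> mtrace (c \<cdot>\<^sub>m M) = c * mtrace M"
  by (simp add: mtrace_def sum_distrib_left)

lemma mtrace_adj_smult_mult:
  assumes "M \<in> carrier_mat N N" "K \<in> carrier_mat N N"
  shows "mtrace (adj (c \<cdot>\<^sub>m M) * K) = cnj c * mtrace (adj M * K)"
  using assms by (simp add: adj_smult mult_smult_assoc_mat[of _ N N] mtrace_smult[of _ N] adj_carrier mult_carrier_square)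

lemma mult_cnj_eq_norm_sq: "z * cnj z = complex_of_real ((cmod z)\<^sup>2)"
  using complex_norm_square[of z] by simp

lemma mtrace_adj_self_eq_0_iff:
  assumes "M \<in> carrier_mat N N"
  shows "mtrace (adj M * M) = 0 \<longleftrightarrow> M = 0\<^sub>m N N"
proof
  have "cnj z * z = complex_of_real ((cmod z)\<^sup>2)" for z
    using mult_cnj_eq_norm_sq[of z] by (simp add: mult.commute)
  then have "mtrace (adj M * M) = of_real (\<Sum>i<N. \<Sum>k<N. (cmod (M $$ (k, i)))\<^sup>2)"
    using assms by (simp only: mtrace_adj_mult of_real_sum)
  moreover assume "mtrace (adj M * M) = 0"
  ultimately have "(\<Sum>i<N. \<Sum>k<N. (cmod (M $$ (k, i)))\<^sup>2) = 0"
    by (metis of_real_eq_0_iff)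
  then have "\<forall>i<N. \<forall>k<N. M $$ (k, i) = 0"
    by (simp add: sum_nonneg_eq_0_iff sum_nonneg)
  then show "M = 0\<^sub>m N N"
    using assms by (intro eq_matI) auto
qed (simp add: mtrace_def)

text \<open>Equality case of the Cauchy--Schwarz inequality for the Hilbert--Schmidt inner product.\<close>

lemma eq_if_mtrace_adj_mult_eq:
  assumes X: "X \<in> carrier_mat N N" and C: "C \<in> carrier_mat N N"
    and "mtrace (adj X * X) = mtrace (adj C * C)" "mtrace (adj C * X) = mtrace (adj C * C)"
  shows "X = C"
proof -
  have real: "cnj (mtrace (adj C * C)) = mtrace (adj C * C)"
    using mtrace_adj_mult_swap[OF C C] by simp
  have XC: "X - C \<in> carrier_mat N N"
    using C by (rule minus_carrier_mat)
  then have "mtrace (adj (X - C) * (X - C))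
      = mtrace (adj X * X) - mtrace (adj X * C) - mtrace (adj C * X) + mtrace (adj C * C)"
    using X C by (simp add: mtrace_adj_mult algebra_simps sum.distrib sum_subtractf)
  also have "\<dots> = 0"
    using assms real by (simp add: mtrace_adj_mult_swap[OF C X])
  finally have "X - C = 0\<^sub>m N N"
    using mtrace_adj_self_eq_0_iff[OF XC] by simp
  then have "\<forall>i<N. \<forall>j<N. X $$ (i, j) = C $$ (i, j)"
    using X C by (metis carrier_matD index_minus_mat(1) index_zero_mat(1) right_minus_eq)
  then show ?thesis
    using X C by (intro eq_matI) auto
qed

definition conj_by :: "complex mat \<Rightarrow> complex mat \<Rightarrow> complex mat" where
  "conj_by P M = P * M * adj P"

lemma conj_by_carrier: "P \<in> carrier_mat N N \<Longrightarrow> M \<in> carrier_mat N N \<Longrightarrow> conj_by P M \<in> carrier_mat N N"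
  unfolding conj_by_def by (metis adj_carrier mult_carrier_mat)

lemma conj_by_one: "M \<in> carrier_mat N N \<Longrightarrow> conj_by (1\<^sub>m N) M = M"
  by (simp add: conj_by_def)

lemma conj_by_smult: "P \<in> carrier_mat N N \<Longrightarrow> M \<in> carrier_mat N N \<Longrightarrow> conj_by P (c \<cdot>\<^sub>m M) = c \<cdot>\<^sub>m conj_by P M"
  unfolding conj_by_def by (metis adj_carrier mult_carrier_mat mult_smult_assoc_mat mult_smult_distrib)

lemma conj_by_mult:
  assumes "P \<in> carrier_mat N N" "Q \<in> carrier_mat N N" "M \<in> carrier_mat N N"
  shows "conj_by (P * Q) M = conj_by P (conj_by Q M)"
  using assms by (simp add: conj_by_def adj_mult[of _ N N _ N] assoc_mult_mat[of _ N N _ N _ N] mult_carrier_square adj_carrier)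

lemma conj_by_adj_conj_by:
  assumes "P \<in> carrier_mat N N" "M \<in> carrier_mat N N" "adj P * P = 1\<^sub>m N"
  shows "conj_by (adj P) (conj_by P M) = M"
proof -
  have "conj_by (adj P) (conj_by P M) = (adj P * P) * M * (adj P * P)"
    using assms(1,2) by (simp add: conj_by_def assoc_mult_mat[of _ N N _ N _ N] mult_carrier_square adj_carrier)
  also have "\<dots> = M"
    using assms by simp
  finally show ?thesis .
qed

lemma mtrace_adj_conj_by:
  assumes U: "U \<in> carrier_mat N N" "adj U * U = 1\<^sub>m N" and A: "A \<in> carrier_mat N N"
  shows "mtrace (adj (conj_by U A) * conj_by U A) = mtrace (adj A * A)"
proof -
  have "adj (conj_by U A) * conj_by U A = U * adj A * (adj U * U) * A * adj U"
    using U(1) A by (simp add: conj_by_def adj_mult[of _ N N _ N] assoc_mult_mat[of _ N N _ N _ N] mult_carrier_square adj_carrier)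
  also have "\<dots> = U * (adj A * A * adj U)"
    using U A by (simp add: assoc_mult_mat[of _ N N _ N _ N] mult_carrier_square adj_carrier)
  also have "mtrace \<dots> = mtrace (adj A * A * adj U * U)"
    using U A by (simp add: mtrace_mult_commute[of U N "adj A * A * adj U"] mult_carrier_square adj_carrier)
  also have "\<dots> = mtrace (adj A * A)"
    using U A by (simp add: assoc_mult_mat[of _ N N _ N _ N] mult_carrier_square adj_carrier)
  finally show ?thesis .
qed

subsection \<open>Kronecker products\<close>

lemma kron_dims [simp]:
  "dim_row (kron A B) = dim_row A * dim_row B" "dim_col (kron A B) = dim_col A * dim_col B"
  by (auto simp: kron_def)

lemma kron_carrier: "A \<in> carrier_mat m k \<Longrightarrow> B \<in> carrier_mat m' k' \<Longrightarrow> kron A B \<in> carrier_mat (m * m') (k * k')"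
  by (metis carrier_matD carrier_matI kron_dims)

lemma index_kron:
  "i < dim_row A * dim_row B \<Longrightarrow> j < dim_col A * dim_col B \<Longrightarrow>
   kron A B $$ (i, j) = A $$ (i div dim_row B, j div dim_col B) * B $$ (i mod dim_row B, j mod dim_col B)"
  by (simp add: kron_def)

lemma kron_mult_kron:
  assumes A: "A \<in> carrier_mat m k" and C: "C \<in> carrier_mat k p"
    and B: "B \<in> carrier_mat m' k'" and D: "D \<in> carrier_mat k' p'" and "k' > 0"
  shows "kron A B * kron C D = kron (A * C) (B * D)"
proof (rule eq_matI)
  fix i j assume "i < dim_row (kron (A * C) (B * D))" "j < dim_col (kron (A * C) (B * D))"
  then have i: "i < m * m'" and j: "j < p * p'"
    using A B C D by auto
  have "m' > 0" "p' > 0"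
    using i j by (auto intro: gr0I)
  then have i': "i div m' < m" "i mod m' < m'" and j': "j div p' < p" "j mod p' < p'"
    using i j by (simp_all add: less_mult_imp_div_less)
  have "(kron A B * kron C D) $$ (i, j) = (\<Sum>t<k * k'. kron A B $$ (i, t) * kron C D $$ (t, j))"
    using i j A B C D by (subst index_mult_mat_sum) auto
  also have "\<dots> = (\<Sum>s<k. \<Sum>r<k'. kron A B $$ (i, s * k' + r) * kron C D $$ (s * k' + r, j))"
    by (rule sum_lessThan_mult_split[OF \<open>k' > 0\<close>])
  also have "\<dots> = (\<Sum>s<k. \<Sum>r<k'. (A $$ (i div m', s) * C $$ (s, j div p')) *
                                    (B $$ (i mod m', r) * D $$ (r, j mod p')))"
  proof (intro sum.cong refl)
    fix s r assume s: "s \<in> {..<k}" and r: "r \<in> {..<k'}"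
    have "(s + 1) * k' \<le> k * k'"
      using s by (intro mult_right_mono) auto
    then have "s * k' + r < k * k'"
      using r by simp
    moreover have "(s * k' + r) div k' = s" "(s * k' + r) mod k' = r"
      using r by auto
    ultimately show "kron A B $$ (i, s * k' + r) * kron C D $$ (s * k' + r, j) =
        (A $$ (i div m', s) * C $$ (s, j div p')) * (B $$ (i mod m', r) * D $$ (r, j mod p'))"
      using A B C D i j r by (simp add: index_kron)
  qed
  also have "\<dots> = (\<Sum>s<k. A $$ (i div m', s) * C $$ (s, j div p')) *
                  (\<Sum>r<k'. B $$ (i mod m', r) * D $$ (r, j mod p'))"
    by (simp add: sum_product)
  also have "\<dots> = kron (A * C) (B * D) $$ (i, j)"
  proof -
    have "(A * C) $$ (i div m', j div p') = (\<Sum>s<k. A $$ (i div m', s) * C $$ (s, j div p'))"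
      using A C i' j' by (subst index_mult_mat_sum) auto
    moreover have "(B * D) $$ (i mod m', j mod p') = (\<Sum>r<k'. B $$ (i mod m', r) * D $$ (r, j mod p'))"
      using B D i' j' by (subst index_mult_mat_sum) auto
    ultimately show ?thesis
      using A B C D i j by (simp add: index_kron)
  qed
  finally show "(kron A B * kron C D) $$ (i, j) = kron (A * C) (B * D) $$ (i, j)" .
qed (use A B C D in auto)

lemma adj_kron: "adj (kron A B) = kron (adj A) (adj B)"
proof (rule eq_matI)
  fix i j assume "i < dim_row (kron (adj A) (adj B))" "j < dim_col (kron (adj A) (adj B))"
  then have i: "i < dim_col A * dim_col B" and j: "j < dim_row A * dim_row B" by auto
  have "dim_col B > 0" using i by (cases "dim_col B") auto
  moreover have "dim_row B > 0" using j by (cases "dim_row B") auto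
  moreover have "i div dim_col B < dim_col A" using i by (simp add: less_mult_imp_div_less)
  moreover have "j div dim_row B < dim_row A" using j by (simp add: less_mult_imp_div_less)
  ultimately show "adj (kron A B) $$ (i,j) = kron (adj A) (adj B) $$ (i,j)"
    using i j by (simp add: index_kron)
qed auto

lemma kron_one: "kron (1\<^sub>m a) (1\<^sub>m b) = 1\<^sub>m (a*b)"
proof (rule eq_matI)
  fix i j assume "i < dim_row (1\<^sub>m (a*b))" "j < dim_col (1\<^sub>m (a*b))"
  then have i: "i < a*b" and j: "j < a*b" by auto
  have b: "b > 0" using i by (cases b) auto
  have "i div b < a" "j div b < a" using i j by (auto simp: less_mult_imp_div_less)
  moreover have "(i div b = j div b \<and> i mod b = j mod b) \<longleftrightarrow> i = j"
    by (metis div_mult_mod_eq)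
  ultimately show "kron (1\<^sub>m a) (1\<^sub>m b) $$ (i,j) = 1\<^sub>m (a*b) $$ (i,j)"
    using i j b by (auto simp: index_kron)
qed auto

subsection \<open>Two-by-two matrices and \<open>SU(2)\<close>\<close>

definition mat2 :: "complex \<Rightarrow> complex \<Rightarrow> complex \<Rightarrow> complex \<Rightarrow> complex mat" where
  "mat2 a b c d = mat 2 2 (\<lambda>(i, j). if i = 0 then (if j = 0 then a else b) else (if j = 0 then c else d))"

lemma mat2_carrier [simp]: "mat2 a b c d \<in> carrier_mat 2 2"
  by (simp add: mat2_def)

lemma mat2_dims [simp]: "dim_row (mat2 a b c d) = 2" "dim_col (mat2 a b c d) = 2"
  by (simp_all add: mat2_def)

lemma index_mat2 [simp]:
  "mat2 a b c d $$ (0, 0) = a" "mat2 a b c d $$ (0, 1) = b"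
  "mat2 a b c d $$ (1, 0) = c" "mat2 a b c d $$ (1, 1) = d"
  "mat2 a b c d $$ (0, Suc 0) = b" "mat2 a b c d $$ (Suc 0, 0) = c" "mat2 a b c d $$ (Suc 0, Suc 0) = d"
  by (simp_all add: mat2_def)

lemma less_2_cases: "(i::nat) < 2 \<longleftrightarrow> i = 0 \<or> i = 1"
  by auto

lemma sum_lessThan_2: "(\<Sum>k<(2::nat). f k) = f 0 + (f 1 :: complex)"
  by (simp add: numeral_2_eq_2)

lemma mat2_eqI:
  assumes "M \<in> carrier_mat 2 2" "N \<in> carrier_mat 2 2"
    "M $$ (0, 0) = N $$ (0, 0)" "M $$ (0, 1) = N $$ (0, 1)" "M $$ (1, 0) = N $$ (1, 0)" "M $$ (1, 1) = N $$ (1, 1)"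
  shows "M = N"
proof (rule eq_matI)
  fix i j assume "i < dim_row N" "j < dim_col N"
  then have "i = 0 \<or> i = 1" "j = 0 \<or> j = 1"
    using assms(2) by auto
  then show "M $$ (i, j) = N $$ (i, j)"
    using assms by auto
qed (use assms in auto)

lemma mat2_eta: "M \<in> carrier_mat 2 2 \<Longrightarrow> M = mat2 (M $$ (0, 0)) (M $$ (0, 1)) (M $$ (1, 0)) (M $$ (1, 1))"
  by (rule mat2_eqI) auto

lemma mat2_eq_iff: "mat2 a b c d = mat2 a' b' c' d' \<longleftrightarrow> a = a' \<and> b = b' \<and> c = c' \<and> d = d'"
  by (metis index_mat2)

lemma mat2_mult: "mat2 a b c d * mat2 e f g h = mat2 (a*e + b*g) (a*f + b*h) (c*e + d*g) (c*f + d*h)"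
proof -
  have entry: "(mat2 a b c d * mat2 e f g h) $$ (i, j) =
      mat2 a b c d $$ (i, 0) * mat2 e f g h $$ (0, j) + mat2 a b c d $$ (i, 1) * mat2 e f g h $$ (1, j)"
    if "i < 2" "j < 2" for i j
    using that by (subst index_mult_mat_sum) (auto simp: sum_lessThan_2)
  show ?thesis
    by (rule mat2_eqI) (auto simp: entry simp del: index_mult_mat intro!: mult_carrier_mat[of _ 2 2 _ 2])
qed

lemma adj_mat2: "adj (mat2 a b c d) = mat2 (cnj a) (cnj c) (cnj b) (cnj d)"
  by (rule mat2_eqI) (auto intro: carrier_matI)

lemma one_mat2: "1\<^sub>m 2 = mat2 1 0 0 1"
  by (rule mat2_eqI) auto

lemma det_mat2: "det (mat2 a b c d) = a*d - b*c"
proof -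
  have "det (mat2 a b c d) = (\<Sum>i<2. mat2 a b c d $$ (i, 0) * cofactor (mat2 a b c d) i 0)"
    by (rule laplace_expansion_column) auto
  also have "\<dots> = a * cofactor (mat2 a b c d) 0 0 + c * cofactor (mat2 a b c d) 1 0"
    by (simp add: sum_lessThan_2)
  also have "cofactor (mat2 a b c d) 0 0 = d"
    unfolding cofactor_def by (subst det_single) (auto simp: mat_delete_def mat2_def intro!: carrier_matI)
  also have "cofactor (mat2 a b c d) 1 0 = - b"
    unfolding cofactor_def by (subst det_single) (auto simp: mat_delete_def mat2_def intro!: carrier_matI)
  finally show ?thesis
    by simp
qed

definition su :: "complex \<Rightarrow> complex \<Rightarrow> complex mat" where
  "su a b = mat2 a (- cnj b) b (cnj a)"

lemma su_mult: "su a b * su c d = su (a*c - cnj b * d) (b*c + cnj a * d)"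
  by (simp add: su_def mat2_mult mat2_eq_iff algebra_simps)

lemma adj_su: "adj (su a b) = su (cnj a) (- b)"
  by (simp add: su_def adj_mat2)

lemma su_in_SU2:
  assumes "a * cnj a + b * cnj b = 1"
  shows "su a b \<in> SU2"
proof -
  have "adj (su a b) * su a b = mat2 (a * cnj a + b * cnj b) 0 0 (a * cnj a + b * cnj b)"
    by (simp add: su_def adj_mat2 mat2_mult algebra_simps)
  then show ?thesis
    using assms by (simp add: SU2_def su_def det_mat2 one_mat2 algebra_simps)
qed

lemma SU2_imp_su:
  assumes "U \<in> SU2"
  obtains a b where "U = su a b" "a * cnj a + b * cnj b = 1"
proof -
  have U: "U \<in> carrier_mat 2 2" "adj U * U = 1\<^sub>m 2" "det U = 1"
    using assms by (auto simp: SU2_def)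
  define p q r s where "p = U $$ (0, 0)" "q = U $$ (0, 1)" "r = U $$ (1, 0)" "s = U $$ (1, 1)"
  have U_eq: "U = mat2 p q r s"
    unfolding p_q_r_s_def by (rule mat2_eta[OF U(1)])
  have "mat2 (cnj p * p + cnj r * r) (cnj p * q + cnj r * s) (cnj q * p + cnj s * r) (cnj q * q + cnj s * s)
        = mat2 1 0 0 1"
    using U(2) by (simp add: U_eq adj_mat2 mat2_mult one_mat2)
  then have norm: "cnj p * p + cnj r * r = 1" and orth: "cnj p * q = - (cnj r * s)"
    by (simp_all add: mat2_eq_iff eq_neg_iff_add_eq_0)
  have det: "p * s - q * r = 1"
    using U(3) by (simp add: U_eq det_mat2)
  \<comment> \<open>\<open>adj U\<close> is the inverse of \<open>U\<close>, which for determinant 1 is the adjugate \<open>mat2 s (- q) (- r) p\<close>\<close>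
  have "cnj p = cnj p * (p * s - q * r)"
    using det by simp
  also have "\<dots> = s * (cnj p * p) - r * (cnj p * q)"
    by (simp add: algebra_simps)
  also have "\<dots> = s * (cnj p * p) + r * (cnj r * s)"
    using orth by simp
  also have "\<dots> = s * (cnj p * p + cnj r * r)"
    by (simp add: algebra_simps)
  finally have s: "s = cnj p"
    using norm by simp
  have "cnj r = cnj r * (p * s - q * r)"
    using det by simp
  also have "\<dots> = p * (cnj r * s) - q * (cnj r * r)"
    by (simp add: algebra_simps)
  also have "\<dots> = - p * (cnj p * q) - q * (cnj r * r)"
    using orth by simp
  also have "\<dots> = - q * (cnj p * p + cnj r * r)"
    by (simp add: algebra_simps)
  finally have q: "q = - cnj r"
    using norm by simp
  show ?thesis
    using norm by (intro that[of p r]) (simp_all add: U_eq s q su_def mult.commute)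
qed

lemma SU2_carrier: "U \<in> SU2 \<Longrightarrow> U \<in> carrier_mat 2 2"
  by (simp add: SU2_def)

lemma SU2_one: "1\<^sub>m 2 \<in> SU2"
  using su_in_SU2[of 1 0] by (simp add: su_def one_mat2)

lemma SU2_mult:
  assumes "U \<in> SU2" "V \<in> SU2"
  shows "U * V \<in> SU2"
proof -
  obtain a b c d where U: "U = su a b" "a * cnj a + b * cnj b = 1"
    and V: "V = su c d" "c * cnj c + d * cnj d = 1"
    using assms by (metis SU2_imp_su)
  have "(a*c - cnj b * d) * cnj (a*c - cnj b * d) + (b*c + cnj a * d) * cnj (b*c + cnj a * d)
     = (a * cnj a + b * cnj b) * (c * cnj c + d * cnj d)"
    by (simp add: algebra_simps)
  then show ?thesis
    using U V by (simp add: su_mult su_in_SU2)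
qed

lemma SU2_adj:
  assumes "U \<in> SU2"
  shows "adj U \<in> SU2"
proof -
  obtain a b where U: "U = su a b" "a * cnj a + b * cnj b = 1"
    using assms by (metis SU2_imp_su)
  then have "cnj a * cnj (cnj a) + (- b) * cnj (- b) = 1"
    by (simp add: mult.commute)
  then show ?thesis
    using U by (simp add: adj_su su_in_SU2)
qed

lemma SU2_unitary:
  assumes "U \<in> SU2"
  shows "adj U * U = 1\<^sub>m 2" "U * adj U = 1\<^sub>m 2"
proof -
  obtain a b where U: "U = su a b" "a * cnj a + b * cnj b = 1"
    using assms by (metis SU2_imp_su)
  have "U * adj U = mat2 (a * cnj a + b * cnj b) 0 0 (a * cnj a + b * cnj b)"
    using U by (simp add: su_def adj_mat2 mat2_mult algebra_simps)
  then show "U * adj U = 1\<^sub>m 2"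
    using U by (simp add: one_mat2)
  show "adj U * U = 1\<^sub>m 2"
    using assms by (simp add: SU2_def)
qed

lemma su_conj_eigenvector:
  fixes a b z v1 v2 R :: complex
  assumes e1: "a*v1 - cnj b*v2 = z*v1" and e2: "b*v1 + cnj a*v2 = z*v2"
    and n: "v1 * cnj v1 + v2 * cnj v2 = R * R" and R: "R \<noteq> 0" "cnj R = R"
  shows "su (cnj v1/R) (-v2/R) * su a b * adj (su (cnj v1/R) (-v2/R)) = su z 0"
proof -
  define p y where "p = cnj v1/R" and "y = -v2/R"
  define P Q where "P = p*a - cnj y * b" and "Q = y*a + cnj p * b"
  have cp: "cnj p = v1/R" and cy: "cnj y = - cnj v2/R"
    unfolding p_def y_def using R by simp_all
  have "su p y * su a b * adj (su p y) = su (P * cnj p + cnj Q * y) (Q * cnj p - cnj P * y)"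
    unfolding adj_su su_mult P_def Q_def by (simp add: algebra_simps)
  moreover have "P * cnj p + cnj Q * y = z"
  proof -
    have "P * cnj p + cnj Q * y = (cnj v1 * (a*v1 - cnj b*v2) + cnj v2 * (b*v1 + cnj a*v2)) / (R*R)"
      unfolding P_def Q_def cp cy using R unfolding p_def y_def by (simp add: field_simps)
    also have "\<dots> = z * (v1 * cnj v1 + v2 * cnj v2) / (R*R)"
      unfolding e1 e2 by (simp add: algebra_simps)
    finally show ?thesis
      using n R by simp
  qed
  moreover have "Q * cnj p - cnj P * y = 0"
  proof -
    have "Q * cnj p - cnj P * y = (v1 * (b*v1 + cnj a*v2) - v2 * (a*v1 - cnj b*v2)) / (R*R)"
      unfolding P_def Q_def cp cy using R unfolding p_def y_def by (simp add: field_simps)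
    then show ?thesis
      unfolding e1 e2 by simp
  qed
  ultimately show ?thesis
    unfolding p_def y_def by simp
qed

text \<open>\<open>z\<^sup>2 - (a + cnj a) z + 1\<close> is the characteristic polynomial of \<open>su a b\<close>.\<close>

lemma su_eigenvalue_exists:
  assumes "a * cnj a + b * cnj b = 1"
  obtains z where "z * cnj z = 1" "z*z - (a + cnj a)*z + 1 = 0"
proof -
  define x where "x = Re a"
  have "complex_of_real ((cmod a)\<^sup>2 + (cmod b)\<^sup>2) = 1"
    using assms by (simp add: mult_cnj_eq_norm_sq)
  then have "(cmod a)\<^sup>2 + (cmod b)\<^sup>2 = 1"
    by (metis of_real_eq_1_iff)
  then have "x\<^sup>2 \<le> 1"
    unfolding x_def cmod_power2 by (smt (verit) zero_le_power2)
  then have s: "sqrt (1 - x\<^sup>2) * sqrt (1 - x\<^sup>2) = 1 - x * x"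
    by (simp add: power2_eq_square)
  have "a + cnj a = Complex (2 * x) 0"
    unfolding x_def by (simp add: complex_eq_iff)
  then show ?thesis
    using s by (intro that[of "Complex x (sqrt (1 - x\<^sup>2))"]) (simp_all add: complex_eq_iff algebra_simps)
qed

lemma norm_sq_sum_eq_real_square:
  assumes "v2 \<noteq> 0"
  obtains R where "R \<noteq> 0" "cnj R = R" "v1 * cnj v1 + v2 * cnj v2 = R * R"
proof -
  define r where "r = sqrt ((cmod v1)\<^sup>2 + (cmod v2)\<^sup>2)"
  have "r > 0"
    unfolding r_def using assms by (simp add: add_nonneg_pos)
  have "complex_of_real r * complex_of_real r = complex_of_real (r\<^sup>2)"
    by (simp add: power2_eq_square)
  also have "r\<^sup>2 = (cmod v1)\<^sup>2 + (cmod v2)\<^sup>2"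
    unfolding r_def by simp
  finally have "v1 * cnj v1 + v2 * cnj v2 = complex_of_real r * complex_of_real r"
    by (simp add: mult_cnj_eq_norm_sq)
  then show ?thesis
    using \<open>r > 0\<close> by (intro that[of "complex_of_real r"]) simp_all
qed

lemma SU2_conj_su_diag:
  assumes "U \<in> SU2"
  obtains V z where "V \<in> SU2" "z * cnj z = 1" "V * U * adj V = su z 0"
proof -
  obtain a b where U: "U = su a b" and norm: "a * cnj a + b * cnj b = 1"
    using assms by (metis SU2_imp_su)
  show ?thesis
  proof (cases "b = 0")
    case True
    have "su 1 0 * U * adj (su 1 0) = su a 0"
      unfolding U True adj_su su_mult by simp
    moreover have "su 1 0 \<in> SU2"
      by (rule su_in_SU2) simp
    moreover have "a * cnj a = 1"
      using norm True by simp
    ultimately show ?thesis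
      by (intro that)
  next
    case False
    obtain z where unit: "z * cnj z = 1" and root: "z*z - (a + cnj a)*z + 1 = 0"
      using su_eigenvalue_exists[OF norm] .
    define v1 v2 where "v1 = z - cnj a" and "v2 = b"
    have "a*v1 - cnj b*v2 - z*v1 = - (z*z - (a + cnj a)*z + 1) + (1 - (a * cnj a + b * cnj b))"
      unfolding v1_def v2_def by (simp add: algebra_simps)
    then have e1: "a*v1 - cnj b*v2 = z*v1"
      using root norm by simp
    have e2: "b*v1 + cnj a*v2 = z*v2"
      unfolding v1_def v2_def by (simp add: algebra_simps)
    obtain R where R: "R \<noteq> 0" "cnj R = R" and n: "v1 * cnj v1 + v2 * cnj v2 = R * R"
      using norm_sq_sum_eq_real_square[of v2 v1] False unfolding v2_def by blast
    have "(cnj v1/R) * cnj (cnj v1/R) + (-v2/R) * cnj (-v2/R) = (v1 * cnj v1 + v2 * cnj v2) / (R*R)"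
      using R(2) by (simp add: field_simps add_divide_distrib)
    then have "(cnj v1/R) * cnj (cnj v1/R) + (-v2/R) * cnj (-v2/R) = 1"
      using n R by simp
    then have "su (cnj v1/R) (-v2/R) \<in> SU2"
      by (rule su_in_SU2)
    then show ?thesis
      using unit su_conj_eigenvector[OF e1 e2 n R, folded U] by (rule that)
  qed
qed

definition diag2 :: "complex \<times> complex \<Rightarrow> complex mat" where
  "diag2 d = mat2 (fst d) 0 0 (snd d)"

lemma SU2_conj_diag2:
  assumes "U \<in> SU2"
  obtains V \<alpha> where "V \<in> SU2" "\<bar>\<alpha>\<bar> \<le> pi" "V * U * adj V = diag2 (cis \<alpha>, cis (- \<alpha>))"
proof -
  obtain V z where V: "V \<in> SU2" "V * U * adj V = su z 0" and unit: "z * cnj z = 1"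
    using SU2_conj_su_diag[OF assms] .
  have "complex_of_real ((cmod z)\<^sup>2) = 1"
    using unit by (simp add: mult_cnj_eq_norm_sq)
  then have "(cmod z)\<^sup>2 = 1"
    by (metis of_real_eq_1_iff)
  then have "cmod z = 1"
    using norm_ge_zero[of z] by (auto simp: power2_eq_1_iff)
  moreover from this have "z \<noteq> 0"
    by auto
  ultimately have "cis (Arg z) = z"
    by (simp add: cis_Arg sgn_div_norm)
  moreover from this have "cis (- Arg z) = cnj z"
    by (metis cis_cnj)
  moreover have "\<bar>Arg z\<bar> \<le> pi"
    using Arg_bounded[of z] by auto
  ultimately show ?thesis
    using V by (intro that[of V "Arg z"]) (simp_all add: diag2_def su_def)
qed

subsection \<open>Local unitaries\<close>

lemma tensor_list_Nil: "tensor_list [] = 1\<^sub>m 1"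
  by (simp add: tensor_list_def)

lemma tensor_list_Cons: "tensor_list (U # Us) = kron U (tensor_list Us)"
  by (simp add: tensor_list_def)

lemma tensor_list_carrier:
  "\<forall>U \<in> set Us. U \<in> carrier_mat 2 2 \<Longrightarrow> tensor_list Us \<in> carrier_mat (2 ^ length Us) (2 ^ length Us)"
proof (induction Us)
  case (Cons U Us)
  then have "kron U (tensor_list Us) \<in> carrier_mat (2 * 2 ^ length Us) (2 * 2 ^ length Us)"
    by (intro kron_carrier) auto
  then show ?case
    by (simp add: tensor_list_Cons)
qed (simp add: tensor_list_Nil)

lemma tensor_list_mult:
  "length Us = length Vs \<Longrightarrow> \<forall>U \<in> set Us. U \<in> carrier_mat 2 2 \<Longrightarrow> \<forall>V \<in> set Vs. V \<in> carrier_mat 2 2 \<Longrightarrow>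
   tensor_list Us * tensor_list Vs = tensor_list (map2 (*) Us Vs)"
proof (induction Us arbitrary: Vs)
  case (Cons U Us)
  then obtain V Vs' where Vs: "Vs = V # Vs'" "length Vs' = length Us"
    by (cases Vs) auto
  have "kron U (tensor_list Us) * kron V (tensor_list Vs') = kron (U * V) (tensor_list Us * tensor_list Vs')"
  proof (rule kron_mult_kron)
    show "tensor_list Us \<in> carrier_mat (2 ^ length Us) (2 ^ length Us)"
      "tensor_list Vs' \<in> carrier_mat (2 ^ length Us) (2 ^ length Us)"
      using Cons.prems Vs tensor_list_carrier[of Us] tensor_list_carrier[of Vs'] by auto
  qed (use Cons.prems Vs in auto)
  then show ?case
    using Cons Vs by (simp add: tensor_list_Cons)
qed (simp add: tensor_list_Nil)

lemma tensor_list_adj: "adj (tensor_list Us) = tensor_list (map adj Us)"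
  by (induction Us) (simp_all add: tensor_list_Nil tensor_list_Cons adj_kron)

lemma tensor_list_one: "tensor_list (replicate n (1\<^sub>m 2)) = 1\<^sub>m (2 ^ n)"
  by (induction n) (simp_all add: tensor_list_Nil tensor_list_Cons kron_one)

lemma SU_loc_carrier: "U \<in> SU_loc n \<Longrightarrow> U \<in> carrier_mat (2 ^ n) (2 ^ n)"
  unfolding SU_loc_def using tensor_list_carrier SU2_carrier by blast

lemma SU_loc_one: "1\<^sub>m (2 ^ n) \<in> SU_loc n"
  unfolding SU_loc_def using SU2_one
  by (auto intro!: exI[of _ "replicate n (1\<^sub>m 2)"] simp: tensor_list_one)

lemma SU_loc_adj:
  assumes "U \<in> SU_loc n"
  shows "adj U \<in> SU_loc n"
proof -
  obtain Us where "U = tensor_list Us" "length Us = n" "\<forall>U\<in>set Us. U \<in> SU2"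
    using assms unfolding SU_loc_def by blast
  then have "adj U = tensor_list (map adj Us)" "length (map adj Us) = n" "\<forall>V\<in>set (map adj Us). V \<in> SU2"
    by (auto simp: tensor_list_adj SU2_adj)
  then show ?thesis
    unfolding SU_loc_def by blast
qed

lemma SU_loc_mult:
  assumes "U \<in> SU_loc n" "V \<in> SU_loc n"
  shows "U * V \<in> SU_loc n"
proof -
  obtain Us Vs where U: "U = tensor_list Us" "length Us = n" "\<forall>U\<in>set Us. U \<in> SU2"
    and V: "V = tensor_list Vs" "length Vs = n" "\<forall>V\<in>set Vs. V \<in> SU2"
    using assms unfolding SU_loc_def by blast
  have "U * V = tensor_list (map2 (*) Us Vs)"
    using U V by (simp add: tensor_list_mult SU2_carrier)
  moreover have "\<forall>W \<in> set (map2 (*) Us Vs). W \<in> SU2"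
    using U(3) V(3) by (auto dest: set_zip_leftD set_zip_rightD intro: SU2_mult)
  moreover have "length (map2 (*) Us Vs) = n"
    using U(2) V(2) by simp
  ultimately show ?thesis
    unfolding SU_loc_def by blast
qed

lemma SU_loc_unitary:
  assumes "U \<in> SU_loc n"
  shows "adj U * U = 1\<^sub>m (2 ^ n)"
proof -
  obtain Us where U: "U = tensor_list Us" "length Us = n" "\<forall>U\<in>set Us. U \<in> SU2"
    using assms unfolding SU_loc_def by blast
  have "adj U * U = tensor_list (map2 (*) (map adj Us) Us)"
    using U by (simp add: tensor_list_adj tensor_list_mult SU2_carrier adj_carrier)
  also have "map2 (*) (map adj Us) Us = replicate n (1\<^sub>m 2)"
    using U(2,3) by (induction Us arbitrary: n) (auto simp: SU2_unitary)
  finally show ?thesis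
    by (simp add: tensor_list_one)
qed

subsection \<open>Diagonal local matrices\<close>

lemma mat_diag_dims [simp]: "dim_row (mat_diag n f) = n" "dim_col (mat_diag n f) = n"
  by (simp_all add: mat_diag_def)

lemma index_mat_diag: "i < n \<Longrightarrow> j < n \<Longrightarrow> mat_diag n f $$ (i, j) = (if i = j then f i else 0)"
  by (simp add: mat_diag_def)

text \<open>Diagonals of local diagonal matrices: the binary digits of \<open>k\<close>, most significant first,
  select the first or second diagonal entry of each tensor factor. Thus \<open>tensor_diag_entry ds k\<close>
  is the \<open>k\<close>-th diagonal entry of \<open>diag2 d\<^sub>1 \<otimes> \<dots> \<otimes> diag2 d\<^sub>m\<close>, and \<open>local_phase as k\<close>
  that of \<open>\<Sum>\<^sub>j I \<otimes> \<dots> \<otimes> diag(a\<^sub>j, -a\<^sub>j) \<otimes> \<dots> \<otimes> I\<close>.\<close>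

fun tensor_diag_entry :: "(complex \<times> complex) list \<Rightarrow> nat \<Rightarrow> complex" where
  "tensor_diag_entry [] k = 1"
| "tensor_diag_entry (d # ds) k =
     (if k div 2 ^ length ds = 0 then fst d else snd d) * tensor_diag_entry ds (k mod 2 ^ length ds)"

fun local_phase :: "real list \<Rightarrow> nat \<Rightarrow> real" where
  "local_phase [] k = 0"
| "local_phase (a # as) k = (if k div 2 ^ length as = 0 then a else - a) + local_phase as (k mod 2 ^ length as)"

lemma tensor_list_diag2: "tensor_list (map diag2 ds) = mat_diag (2 ^ length ds) (tensor_diag_entry ds)"
proof (induction ds)
  case Nil
  show ?case
    by (rule eq_matI) (auto simp: tensor_list_Nil mat_diag_def)
next
  case (Cons d ds)
  define M where "M = (2::nat) ^ length ds"
  have "kron (diag2 d) (mat_diag M (tensor_diag_entry ds)) = mat_diag (2 * M) (tensor_diag_entry (d # ds))"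
  proof (rule eq_matI)
    fix i j assume "i < dim_row (mat_diag (2 * M) (tensor_diag_entry (d # ds)))"
      "j < dim_col (mat_diag (2 * M) (tensor_diag_entry (d # ds)))"
    then have i: "i < 2 * M" and j: "j < 2 * M"
      by auto
    have M: "M > 0"
      by (simp add: M_def)
    have div: "i div M < 2" "j div M < 2"
      using i j by (auto simp: less_mult_imp_div_less mult.commute)
    have mod: "i mod M < M" "j mod M < M"
      using M by auto
    have eq: "i = j \<longleftrightarrow> i div M = j div M \<and> i mod M = j mod M"
      by (metis div_mult_mod_eq)
    have diag2: "diag2 d $$ (a, b) = (if a = b then (if a = 0 then fst d else snd d) else 0)"
      if "a < 2" "b < 2" for a b
      using that by (auto simp: diag2_def less_2_cases)
    have "kron (diag2 d) (mat_diag M (tensor_diag_entry ds)) $$ (i, j)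
          = diag2 d $$ (i div M, j div M) * mat_diag M (tensor_diag_entry ds) $$ (i mod M, j mod M)"
      using i j by (subst index_kron) (auto simp: diag2_def)
    then show "kron (diag2 d) (mat_diag M (tensor_diag_entry ds)) $$ (i, j) =
          mat_diag (2 * M) (tensor_diag_entry (d # ds)) $$ (i, j)"
      using i j div mod by (auto simp: diag2 index_mat_diag eq M_def)
  qed (auto simp: diag2_def)
  then show ?case
    using Cons by (simp add: tensor_list_Cons M_def del: tensor_diag_entry.simps)
qed

lemma diag2_cis_SU2: "diag2 (cis a, cis (- a)) \<in> SU2"
proof -
  have "diag2 (cis a, cis (- a)) = su (cis a) 0"
    by (simp add: diag2_def su_def cis_cnj)
  moreover have "cis a * cnj (cis a) + 0 * cnj 0 = 1"
    by (simp add: cis_cnj cis_mult)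
  ultimately show ?thesis
    using su_in_SU2 by metis
qed

definition local_phase_gate :: "real list \<Rightarrow> complex mat" where
  "local_phase_gate as = tensor_list (map (\<lambda>a. diag2 (cis a, cis (- a))) as)"

lemma local_phase_gate_eq: "local_phase_gate as = mat_diag (2 ^ length as) (\<lambda>k. cis (local_phase as k))"
proof -
  have "tensor_diag_entry (map (\<lambda>a. (cis a, cis (- a))) as) = (\<lambda>k. cis (local_phase as k))"
  proof
    show "tensor_diag_entry (map (\<lambda>a. (cis a, cis (- a))) as) k = cis (local_phase as k)" for k
      by (induction as arbitrary: k) (auto simp: cis_mult)
  qed
  then show ?thesis
    unfolding local_phase_gate_def using tensor_list_diag2[of "map (\<lambda>a. (cis a, cis (- a))) as"]
    by (simp add: comp_def)
qed

lemma local_phase_gate_SU_loc: "local_phase_gate as \<in> SU_loc (length as)"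
  unfolding local_phase_gate_def SU_loc_def
  by (rule CollectI, rule exI[of _ "map (\<lambda>a. diag2 (cis a, cis (- a))) as"]) (auto simp: diag2_cis_SU2)

lemma local_phase_scale: "local_phase (map (\<lambda>x. t * x) as) k = t * local_phase as k"
  by (induction as arbitrary: k) (auto simp: algebra_simps)

lemma local_phase_diff:
  "length as = length bs \<Longrightarrow> local_phase (map2 (-) as bs) k = local_phase as k - local_phase bs k"
proof (induction as arbitrary: bs k)
  case (Cons a as)
  then obtain b bs' where "bs = b # bs'" "length as = length bs'"
    by (cases bs) auto
  then show ?case
    using Cons.IH by simp
qed simp

lemma abs_local_phase_le: "\<forall>a\<in>set as. \<bar>a\<bar> \<le> pi \<Longrightarrow> \<bar>local_phase as k\<bar> \<le> length as * pi"
proof (induction as arbitrary: k)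
  case (Cons a as)
  then have "\<bar>local_phase as (k mod 2 ^ length as)\<bar> \<le> length as * pi" "\<bar>a\<bar> \<le> pi"
    by auto
  then show ?case
    by (auto simp: algebra_simps)
qed simp

lemma sum_tensor_diag_entry_update:
  "(\<Sum>j<length as. tensor_diag_entry ((replicate (length as) (1, 1))[j := (\<i> * of_real (as!j), - \<i> * of_real (as!j))]) k)
   = \<i> * of_real (local_phase as k)"
proof (induction as arbitrary: k)
  case (Cons a as)
  define m where "m = length as"
  have ones: "tensor_diag_entry (replicate m (1, 1)) k' = 1" for k'
    by (induction m arbitrary: k') auto
  have "(\<Sum>j<length (a # as). tensor_diag_entry ((replicate (length (a # as)) (1, 1))
          [j := (\<i> * of_real ((a # as)!j), - \<i> * of_real ((a # as)!j))]) k)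
     = tensor_diag_entry ((\<i> * of_real a, - \<i> * of_real a) # replicate m (1, 1)) k
       + (\<Sum>j<m. tensor_diag_entry ((1, 1) # (replicate m (1, 1))[j := (\<i> * of_real (as!j), - \<i> * of_real (as!j))]) k)"
    unfolding length_Cons sum.lessThan_Suc_shift by (simp add: m_def del: tensor_diag_entry.simps)
  also have "\<dots> = (if k div 2 ^ m = 0 then \<i> * of_real a else - \<i> * of_real a)
       + (\<Sum>j<m. tensor_diag_entry ((replicate m (1, 1))[j := (\<i> * of_real (as!j), - \<i> * of_real (as!j))]) (k mod 2 ^ m))"
    by (simp add: ones)
  also have "\<dots> = \<i> * of_real (local_phase (a # as) k)"
    using Cons.IH unfolding m_def by (simp add: algebra_simps)
  finally show ?case .
qed simp

lemma local_diag_eq: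
  "local_diag n j l = mat_diag (2 ^ n) (tensor_diag_entry ((replicate n (1, 1))[j := (\<i> * of_real l, - \<i> * of_real l)]))"
proof -
  have "diag_su2 l = diag2 (\<i> * of_real l, - \<i> * of_real l)"
    by (rule mat2_eqI) (auto simp: diag_su2_def diag2_def)
  moreover have "1\<^sub>m 2 = diag2 (1, 1)"
    by (simp add: diag2_def one_mat2)
  ultimately have "(replicate n (1\<^sub>m 2))[j := diag_su2 l] =
      map diag2 ((replicate n (1, 1))[j := (\<i> * of_real l, - \<i> * of_real l)])"
    by (simp add: map_update)
  then show ?thesis
    unfolding local_diag_def by (simp add: tensor_list_diag2)
qed

lemma foldr_plus_mat_diag:
  "foldr (+) (map (\<lambda>j. mat_diag N (g j)) js) (0\<^sub>m N N) = mat_diag N (\<lambda>k. \<Sum>j\<leftarrow>js. g j k)"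
proof (induction js)
  case Nil
  show ?case
    by (rule eq_matI) (auto simp: index_mat_diag)
next
  case (Cons j js)
  then show ?case
    by simp (rule eq_matI, auto simp: index_mat_diag)
qed

lemma t_loc_element_eq:
  "foldr (+) (map (\<lambda>j. local_diag n j (lam j)) [0..<n]) (0\<^sub>m (2 ^ n) (2 ^ n))
   = mat_diag (2 ^ n) (\<lambda>k. \<i> * of_real (local_phase (map lam [0..<n]) k))"
proof -
  have "(\<Sum>j\<leftarrow>[0..<n]. tensor_diag_entry ((replicate n (1, 1))[j := (\<i> * of_real (lam j), - \<i> * of_real (lam j))]) k)
        = \<i> * of_real (local_phase (map lam [0..<n]) k)" for k
    using sum_tensor_diag_entry_update[of "map lam [0..<n]" k]
    by (simp flip: sum_set_upt_conv_sum_list_nat add: atLeast0LessThan)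
  then show ?thesis
    unfolding local_diag_eq foldr_plus_mat_diag by simp
qed

lemma t_loc_eq: "t_loc n = {mat_diag (2 ^ n) (\<lambda>k. \<i> * of_real (local_phase as k)) | as. length as = n}"
  unfolding t_loc_def
proof (intro equalityI subsetI)
  fix \<Delta> assume "\<Delta> \<in> {foldr (+) (map (\<lambda>j. local_diag n j (lam j)) [0..<n]) (0\<^sub>m (2 ^ n) (2 ^ n)) | lam. True}"
  then show "\<Delta> \<in> {mat_diag (2 ^ n) (\<lambda>k. \<i> * of_real (local_phase as k)) | as. length as = n}"
    using t_loc_element_eq by fastforce
next
  fix \<Delta> assume "\<Delta> \<in> {mat_diag (2 ^ n) (\<lambda>k. \<i> * of_real (local_phase as k)) | as. length as = n}"
  then obtain as where "\<Delta> = mat_diag (2 ^ n) (\<lambda>k. \<i> * of_real (local_phase as k))" "length as = n"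
    by blast
  moreover have "map (\<lambda>j. as ! j) [0..<n] = as"
    unfolding \<open>length as = n\<close>[symmetric] by (rule map_nth)
  ultimately have "\<Delta> = foldr (+) (map (\<lambda>j. local_diag n j (as ! j)) [0..<n]) (0\<^sub>m (2 ^ n) (2 ^ n))"
    using t_loc_element_eq[of n "\<lambda>j. as ! j"] by simp
  then show "\<Delta> \<in> {foldr (+) (map (\<lambda>j. local_diag n j (lam j)) [0..<n]) (0\<^sub>m (2 ^ n) (2 ^ n)) | lam. True}"
    by blast
qed

lemma adj_mat_diag: "adj (mat_diag N f) = mat_diag N (\<lambda>k. cnj (f k))"
  by (rule eq_matI) (auto simp: index_mat_diag)

lemma index_conj_by_mat_diag:
  assumes "B \<in> carrier_mat N N" "k < N" "l < N"
  shows "conj_by (mat_diag N f) B $$ (k, l) = f k * B $$ (k, l) * cnj (f l)"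
  using assms by (simp add: conj_by_def adj_mat_diag mat_diag_mult_left[OF assms(1)] mat_diag_mult_right[of _ N N])

lemma conj_by_mat_diag_cis_eq_smult_iff:
  assumes B: "B \<in> carrier_mat N N"
  shows "conj_by (mat_diag N (\<lambda>k. cis (s k))) B = cis \<theta> \<cdot>\<^sub>m B \<longleftrightarrow>
         (\<forall>k<N. \<forall>l<N. B $$ (k, l) \<noteq> 0 \<longrightarrow> cis (s k - s l) = cis \<theta>)"
proof -
  have cis: "cis a * z * cnj (cis b) = cis (a - b) * z" for a b z
  proof -
    have "cis a * cnj (cis b) = cis (a - b)"
      by (simp add: cis_cnj cis_mult)
    then show ?thesis
      by (metis mult.commute mult.left_commute)
  qed
  have "conj_by (mat_diag N (\<lambda>k. cis (s k))) B \<in> carrier_mat N N"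
    using B by (simp add: conj_by_carrier)
  then have conj: "conj_by (mat_diag N (\<lambda>k. cis (s k))) B = mat N N (\<lambda>(k, l). cis (s k - s l) * B $$ (k, l))"
    using B by (intro eq_matI) (auto simp: index_conj_by_mat_diag cis)
  show ?thesis
    unfolding conj using B by (auto simp: mat_eq_iff)
qed

lemma mat_diag_commutator_eq_smult_iff:
  assumes B: "B \<in> carrier_mat N N"
  shows "mat_diag N (\<lambda>k. \<i> * of_real (s k)) * B - B * mat_diag N (\<lambda>k. \<i> * of_real (s k))
           = (\<i> * of_real \<phi>) \<cdot>\<^sub>m B \<longleftrightarrow>
         (\<forall>k<N. \<forall>l<N. B $$ (k, l) \<noteq> 0 \<longrightarrow> s k - s l = \<phi>)"
proof -
  let ?D = "mat_diag N (\<lambda>k. \<i> * of_real (s k))"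
  have comm: "?D * B - B * ?D = mat N N (\<lambda>(k, l). (\<i> * of_real (s k - s l)) * B $$ (k, l))"
    using B by (intro eq_matI) (auto simp: mat_diag_mult_left[OF B] mat_diag_mult_right[OF B] algebra_simps)
  show ?thesis
    unfolding comm using B by (auto simp: mat_eq_iff simp flip: of_real_diff)
qed

lemma commutator_eq_smult_imp_conj_by_cis:
  assumes B: "B \<in> carrier_mat N N" and "\<phi> \<noteq> 0"
    and "mat_diag N (\<lambda>k. \<i> * of_real (s k)) * B - B * mat_diag N (\<lambda>k. \<i> * of_real (s k))
           = (\<i> * of_real \<phi>) \<cdot>\<^sub>m B"
  shows "conj_by (mat_diag N (\<lambda>k. cis (t * s k))) B = cis (t * \<phi>) \<cdot>\<^sub>m B"
proof -
  have "\<forall>k<N. \<forall>l<N. B $$ (k, l) \<noteq> 0 \<longrightarrow> s k - s l = \<phi>"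
    using assms mat_diag_commutator_eq_smult_iff[OF B] by blast
  then have "\<forall>k<N. \<forall>l<N. B $$ (k, l) \<noteq> 0 \<longrightarrow> cis (t * s k - t * s l) = cis (t * \<phi>)"
    by (metis right_diff_distrib)
  then show ?thesis
    by (simp add: conj_by_mat_diag_cis_eq_smult_iff[OF B])
qed

subsection \<open>Rotational symmetry from a commutator relation\<close>

lemma W_loc_conj_by: "W_loc n C A = {mtrace (adj C * conj_by U A) | U. U \<in> SU_loc n}"
  by (simp add: W_loc_def conj_by_def)

lemma phase_orbit_imp_rot_symmetric:
  assumes A: "A \<in> carrier_mat (2 ^ n) (2 ^ n)" and C: "C \<in> carrier_mat (2 ^ n) (2 ^ n)"
    and orbit: "\<And>\<psi>. \<exists>G \<in> SU_loc n. conj_by G A = cis \<psi> \<cdot>\<^sub>m A"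
  shows "rot_symmetric (W_loc n C A)"
proof -
  have rotate: "cis \<psi> * z \<in> W_loc n C A" if "z \<in> W_loc n C A" for \<psi> z
  proof -
    obtain X where X: "X \<in> SU_loc n" "z = mtrace (adj C * conj_by X A)"
      using \<open>z \<in> W_loc n C A\<close> unfolding W_loc_conj_by by blast
    obtain G where G: "G \<in> SU_loc n" "conj_by G A = cis \<psi> \<cdot>\<^sub>m A"
      using orbit by blast
    have Xc: "X \<in> carrier_mat (2 ^ n) (2 ^ n)" and Gc: "G \<in> carrier_mat (2 ^ n) (2 ^ n)"
      using X G SU_loc_carrier by auto
    have "conj_by (X * G) A = cis \<psi> \<cdot>\<^sub>m conj_by X A"
      using A Xc Gc G by (simp add: conj_by_mult conj_by_smult)
    then have "mtrace (adj C * conj_by (X * G) A) = cis \<psi> * z"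
      using A C X Xc by (simp add: mtrace_adj_mult_smult conj_by_carrier)
    moreover have "X * G \<in> SU_loc n"
      using X G by (simp add: SU_loc_mult)
    ultimately show ?thesis
      unfolding W_loc_conj_by by force
  qed
  show ?thesis
    unfolding rot_symmetric_def
  proof (intro allI equalityI subsetI)
    fix \<phi> :: real and w
    assume "w \<in> W_loc n C A"
    then have "w = cis \<phi> * (cis (- \<phi>) * w)" "cis (- \<phi>) * w \<in> W_loc n C A"
      by (simp_all add: cis_mult rotate)
    then show "w \<in> (\<lambda>z. cis \<phi> * z) ` W_loc n C A"
      by blast
  qed (use rotate in auto)
qed

lemma commutator_imp_phase_orbit:
  assumes A: "A \<in> carrier_mat (2 ^ n) (2 ^ n)" and U: "U \<in> SU_loc n" and \<Delta>: "\<Delta> \<in> t_loc n"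
    and "\<phi> \<noteq> 0" and comm: "\<Delta> * conj_by U A - conj_by U A * \<Delta> = (\<i> * of_real \<phi>) \<cdot>\<^sub>m conj_by U A"
  shows "\<exists>G \<in> SU_loc n. conj_by G A = cis \<psi> \<cdot>\<^sub>m A"
proof -
  define N where "N = (2::nat) ^ n"
  obtain as where as: "length as = n" "\<Delta> = mat_diag N (\<lambda>k. \<i> * of_real (local_phase as k))"
    using \<Delta> unfolding t_loc_eq N_def by blast
  define B where "B = conj_by U A"
  have Uc: "U \<in> carrier_mat N N" and Ac: "A \<in> carrier_mat N N"
    using U A SU_loc_carrier unfolding N_def by auto
  then have B: "B \<in> carrier_mat N N"
    unfolding B_def by (rule conj_by_carrier)
  \<comment> \<open>\<open>E = exp (t \<Delta>)\<close> for \<open>t = \<psi> / \<phi>\<close>\<close>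
  define E where "E = local_phase_gate (map (\<lambda>x. \<psi> / \<phi> * x) as)"
  have E_eq: "E = mat_diag N (\<lambda>k. cis (\<psi> / \<phi> * local_phase as k))"
    unfolding E_def local_phase_gate_eq by (simp add: local_phase_scale as(1) N_def)
  have E: "E \<in> SU_loc n"
    unfolding E_def using local_phase_gate_SU_loc as(1) by (metis length_map)
  have Ec: "E \<in> carrier_mat N N"
    unfolding E_eq by simp
  have EB: "conj_by E B = cis \<psi> \<cdot>\<^sub>m B"
    using commutator_eq_smult_imp_conj_by_cis[OF B \<open>\<phi> \<noteq> 0\<close>, of "local_phase as" "\<psi> / \<phi>"]
      comm \<open>\<phi> \<noteq> 0\<close> unfolding E_eq as(2) B_def by simp
  have "conj_by (adj U * (E * U)) A = conj_by (adj U) (conj_by E B)"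
    using Uc Ac Ec unfolding B_def by (simp add: conj_by_mult[of _ N] adj_carrier mult_carrier_square)
  also have "\<dots> = cis \<psi> \<cdot>\<^sub>m conj_by (adj U) B"
    using Uc B by (simp add: EB conj_by_smult[of _ N] adj_carrier)
  also have "conj_by (adj U) B = A"
    using Uc Ac SU_loc_unitary[OF U] unfolding B_def N_def by (rule conj_by_adj_conj_by)
  finally show ?thesis
    using U E by (meson SU_loc_adj SU_loc_mult)
qed

subsection \<open>A commutator relation from rotational symmetry\<close>

lemma rot_symmetric_imp_phase_orbit:
  assumes A: "A \<in> carrier_mat (2 ^ n) (2 ^ n)"
    and rot: "\<forall>C \<in> carrier_mat (2 ^ n) (2 ^ n). rot_symmetric (W_loc n C A)"
  shows "\<exists>U \<in> SU_loc n. conj_by U A = cis \<theta> \<cdot>\<^sub>m A"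
proof -
  define N where "N = (2::nat) ^ n"
  define C where "C = cis \<theta> \<cdot>\<^sub>m A"
  define r where "r = mtrace (adj A * A)"
  have Ac: "A \<in> carrier_mat N N" and Cc: "C \<in> carrier_mat N N"
    using A unfolding N_def C_def by auto
  have CA: "mtrace (adj C * A) = cis (- \<theta>) * r"
    unfolding C_def r_def using Ac by (simp add: mtrace_adj_smult_mult cis_cnj)
  have "mtrace (adj C * conj_by (1\<^sub>m N) A) \<in> W_loc n C A"
    unfolding W_loc_conj_by N_def using SU_loc_one by blast
  then have "cis (- \<theta>) * r \<in> W_loc n C A"
    by (simp add: conj_by_one[OF Ac] CA)
  moreover have "(\<lambda>z. cis \<theta> * z) ` W_loc n C A = W_loc n C A"
    using rot Cc unfolding rot_symmetric_def N_def by blast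
  moreover have "cis \<theta> * (cis (- \<theta>) * r) = r"
    by (simp add: cis_mult flip: mult.assoc)
  ultimately have "r \<in> W_loc n C A"
    by (metis image_eqI)
  then obtain U where U: "U \<in> SU_loc n" "mtrace (adj C * conj_by U A) = r"
    unfolding W_loc_conj_by by blast
  have Uc: "U \<in> carrier_mat N N"
    using U SU_loc_carrier unfolding N_def by auto
  have CC: "mtrace (adj C * C) = r"
    using mtrace_adj_mult_smult[OF Cc Ac, of "cis \<theta>", folded C_def]
    by (simp add: CA cis_mult flip: mult.assoc)
  have "mtrace (adj (conj_by U A) * conj_by U A) = r"
    unfolding r_def using Uc Ac SU_loc_unitary[OF U(1)] by (simp add: mtrace_adj_conj_by N_def)
  then have "conj_by U A = C"
    using Uc Ac Cc U(2) CC by (intro eq_if_mtrace_adj_mult_eq[of _ N]) (simp_all add: conj_by_carrier)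
  then show ?thesis
    using U(1) C_def by blast
qed

lemma SU_loc_conj_local_phase_gate:
  assumes "U \<in> SU_loc n"
  obtains V as where "V \<in> SU_loc n" "length as = n" "\<forall>a\<in>set as. \<bar>a\<bar> \<le> pi"
    "conj_by V U = local_phase_gate as"
proof -
  obtain Us where U: "U = tensor_list Us" "length Us = n" "\<forall>W\<in>set Us. W \<in> SU2"
    using assms unfolding SU_loc_def by blast
  have "\<forall>W\<in>set Us. \<exists>V \<alpha>. V \<in> SU2 \<and> \<bar>\<alpha>\<bar> \<le> pi \<and> V * W * adj V = diag2 (cis \<alpha>, cis (- \<alpha>))"
    using U(3) by (metis SU2_conj_diag2)
  then obtain g \<alpha> where g: "\<forall>W\<in>set Us. g W \<in> SU2 \<and> \<bar>\<alpha> W\<bar> \<le> pi \<and>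
      g W * W * adj (g W) = diag2 (cis (\<alpha> W), cis (- \<alpha> W))"
    by metis
  define Vs where "Vs = map g Us"
  have Vs: "\<forall>V\<in>set Vs. V \<in> carrier_mat 2 2" and Us: "\<forall>V\<in>set Us. V \<in> carrier_mat 2 2"
    using g U(3) SU2_carrier unfolding Vs_def by auto
  have VsUs: "\<forall>V\<in>set (map2 (*) Vs Us). V \<in> carrier_mat 2 2"
    using Vs Us by (auto dest!: set_zip_leftD set_zip_rightD[of _ _ Vs] elim!: in_set_zipE)
  have "conj_by (tensor_list Vs) U = tensor_list (map2 (*) (map2 (*) Vs Us) (map adj Vs))"
    unfolding conj_by_def U(1) tensor_list_adj using Vs Us VsUs
    by (simp add: tensor_list_mult Vs_def adj_carrier)
  also have "map2 (*) (map2 (*) Vs Us) (map adj Vs) = map (\<lambda>W. g W * W * adj (g W)) Us"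
    unfolding Vs_def by (induction Us) auto
  also have "\<dots> = map (\<lambda>a. diag2 (cis a, cis (- a))) (map \<alpha> Us)"
    using g by auto
  finally have "conj_by (tensor_list Vs) U = local_phase_gate (map \<alpha> Us)"
    unfolding local_phase_gate_def .
  moreover have "tensor_list Vs \<in> SU_loc n"
    unfolding SU_loc_def Vs_def using g U(2) by (intro CollectI exI[of _ "map g Us"]) auto
  ultimately show ?thesis
    using U(2) g by (intro that) auto
qed

lemma phase_orbit_imp_local_phases:
  assumes A: "A \<in> carrier_mat (2 ^ n) (2 ^ n)" and U: "U \<in> SU_loc n"
    and UA: "conj_by U A = cis \<theta> \<cdot>\<^sub>m A"
  obtains V as where "V \<in> SU_loc n" "length as = n" "\<forall>a\<in>set as. \<bar>a\<bar> \<le> pi"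
    "\<forall>k < 2 ^ n. \<forall>l < 2 ^ n. conj_by V A $$ (k, l) \<noteq> 0 \<longrightarrow>
       cis (local_phase as k - local_phase as l) = cis \<theta>"
proof -
  define N where "N = (2::nat) ^ n"
  obtain V as where V: "V \<in> SU_loc n" "length as = n" "\<forall>a\<in>set as. \<bar>a\<bar> \<le> pi"
    "conj_by V U = local_phase_gate as"
    using SU_loc_conj_local_phase_gate[OF U] .
  have Vc: "V \<in> carrier_mat N N" and Uc: "U \<in> carrier_mat N N" and Ac: "A \<in> carrier_mat N N"
    using V U A SU_loc_carrier unfolding N_def by auto
  define B where "B = conj_by V A"
  have B: "B \<in> carrier_mat N N"
    unfolding B_def using Vc Ac by (rule conj_by_carrier)
  have "conj_by (local_phase_gate as) B = conj_by (V * U * adj V) B"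
    unfolding V(4)[symmetric] conj_by_def ..
  also have "\<dots> = conj_by V (conj_by U (conj_by (adj V) B))"
    using Vc Uc B by (simp add: conj_by_mult[of _ N] adj_carrier mult_carrier_square conj_by_carrier)
  also have "conj_by (adj V) B = A"
    unfolding B_def using Vc Ac SU_loc_unitary[OF V(1)] unfolding N_def by (rule conj_by_adj_conj_by)
  also have "conj_by V (conj_by U A) = cis \<theta> \<cdot>\<^sub>m B"
    unfolding UA B_def using Vc Ac by (rule conj_by_smult)
  finally have "conj_by (mat_diag N (\<lambda>k. cis (local_phase as k))) B = cis \<theta> \<cdot>\<^sub>m B"
    unfolding local_phase_gate_eq V(2) N_def .
  from V(1-3) this[unfolded conj_by_mat_diag_cis_eq_smult_iff[OF B], unfolded B_def N_def]
  show ?thesis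
    by (rule that)
qed

lemma cis_eq_cis_imp_Ints:
  assumes "cis x = cis y"
  shows "(x - y) / (2 * pi) \<in> \<int>"
proof -
  have "sin x = sin y \<and> cos x = cos y"
    using assms by (metis cis.sel)
  then obtain m :: int where "x = y + 2 * pi * m"
    using sin_cos_eq_iff by blast
  then show ?thesis
    by simp
qed

lemma phase_offset_bounded_Ints:
  assumes "cis (x - y) = cis \<theta>" "\<bar>x\<bar> \<le> c" "\<bar>y\<bar> \<le> c" "\<bar>\<theta>\<bar> \<le> 1"
  shows "(x - y - \<theta>) / (2 * pi) \<in> {z \<in> \<int>. \<bar>z\<bar> \<le> 2 * c + 1}"
proof -
  have "\<bar>(x - y - \<theta>) / (2 * pi)\<bar> = \<bar>x - y - \<theta>\<bar> / (2 * pi)"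
    by (simp add: abs_divide)
  also have "\<dots> \<le> \<bar>x - y - \<theta>\<bar> / 1"
    using pi_ge_two by (intro divide_left_mono) auto
  also have "\<dots> \<le> 2 * c + 1"
    using assms(2-4) by auto
  finally show ?thesis
    using cis_eq_cis_imp_Ints[OF assms(1)] by blast
qed

text \<open>The offsets \<open>(ph \<theta> k - ph \<theta> l - \<theta>) / 2\<pi>\<close> are integers from a finite range, so two distinct
  \<open>\<theta> \<in> [0, 1]\<close> share the same support and offsets; subtracting their phase functions removes the offsets.\<close>

lemma phase_pigeonhole:
  fixes ph :: "real \<Rightarrow> nat \<Rightarrow> real" and S :: "real \<Rightarrow> nat \<Rightarrow> nat \<Rightarrow> bool"
  assumes bound: "\<And>\<theta> k. \<bar>ph \<theta> k\<bar> \<le> c"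
    and phases: "\<And>\<theta> k l. k < N \<Longrightarrow> l < N \<Longrightarrow> S \<theta> k l \<Longrightarrow> cis (ph \<theta> k - ph \<theta> l) = cis \<theta>"
  obtains \<theta>\<^sub>1 \<theta>\<^sub>2 where "\<theta>\<^sub>1 \<noteq> \<theta>\<^sub>2"
    "\<forall>k<N. \<forall>l<N. S \<theta>\<^sub>1 k l \<longrightarrow> (ph \<theta>\<^sub>1 k - ph \<theta>\<^sub>2 k) - (ph \<theta>\<^sub>1 l - ph \<theta>\<^sub>2 l) = \<theta>\<^sub>1 - \<theta>\<^sub>2"
proof -
  define offset where "offset \<theta> k l = (ph \<theta> k - ph \<theta> l - \<theta>) / (2 * pi)" for \<theta> k l
  define pattern where "pattern \<theta> = (\<lambda>(k, l). if k < N \<and> l < N \<and> S \<theta> k l then Some (offset \<theta> k l) else None)"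
    for \<theta>
  define Z where "Z = {z \<in> \<int>. \<bar>z\<bar> \<le> 2 * c + 1}"
  define P where "P = {f. \<forall>x. (x \<in> {..<N} \<times> {..<N} \<longrightarrow> f x \<in> insert None (Some ` Z)) \<and>
                          (x \<notin> {..<N} \<times> {..<N} \<longrightarrow> f x = None)}"
  have "finite P"
    unfolding P_def Z_def using finite_abs_int_segment by (intro finite_set_of_finite_funs) auto
  have "offset \<theta> k l \<in> Z" if "\<theta> \<in> {0..1}" "k < N" "l < N" "S \<theta> k l" for \<theta> k l
    unfolding offset_def Z_def using that(1) bound
    by (intro phase_offset_bounded_Ints[OF phases[OF that(2-4)]]) auto
  then have "pattern ` {0..1} \<subseteq> P"
    unfolding pattern_def P_def by auto
  then have "finite (pattern ` {0..1})"
    using \<open>finite P\<close> finite_subset by blast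
  moreover have "infinite {0..1::real}"
    by simp
  ultimately have "\<not> inj_on pattern {0..1}"
    using finite_imageD by blast
  then obtain \<theta>\<^sub>1 \<theta>\<^sub>2 where "\<theta>\<^sub>1 \<noteq> \<theta>\<^sub>2" "pattern \<theta>\<^sub>1 = pattern \<theta>\<^sub>2"
    unfolding inj_on_def by blast
  moreover have "offset \<theta>\<^sub>1 k l = offset \<theta>\<^sub>2 k l" if "k < N" "l < N" "S \<theta>\<^sub>1 k l" for k l
    using fun_cong[OF \<open>pattern \<theta>\<^sub>1 = pattern \<theta>\<^sub>2\<close>, of "(k, l)"] that
    unfolding pattern_def by (auto split: if_splits)
  ultimately show ?thesis
    unfolding offset_def by (intro that[of \<theta>\<^sub>1 \<theta>\<^sub>2]) (auto simp: field_simps)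
qed

lemma rot_symmetric_imp_local_phases:
  assumes A: "A \<in> carrier_mat (2 ^ n) (2 ^ n)"
    and rot: "\<forall>C \<in> carrier_mat (2 ^ n) (2 ^ n). rot_symmetric (W_loc n C A)"
  shows "\<exists>V as. V \<in> SU_loc n \<and> length as = n \<and> (\<forall>a\<in>set as. \<bar>a\<bar> \<le> pi) \<and>
           (\<forall>k < 2 ^ n. \<forall>l < 2 ^ n. conj_by V A $$ (k, l) \<noteq> 0 \<longrightarrow>
              cis (local_phase as k - local_phase as l) = cis \<theta>)"
proof -
  obtain U where "U \<in> SU_loc n" "conj_by U A = cis \<theta> \<cdot>\<^sub>m A"
    using rot_symmetric_imp_phase_orbit[OF A rot] by blast
  then obtain V as where "V \<in> SU_loc n" "length as = n" "\<forall>a\<in>set as. \<bar>a\<bar> \<le> pi"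
    "\<forall>k < 2 ^ n. \<forall>l < 2 ^ n. conj_by V A $$ (k, l) \<noteq> 0 \<longrightarrow>
       cis (local_phase as k - local_phase as l) = cis \<theta>"
    by (rule phase_orbit_imp_local_phases[OF A])
  then show ?thesis
    by blast
qed

lemma rot_symmetric_imp_commutator:
  assumes A: "A \<in> carrier_mat (2 ^ n) (2 ^ n)"
    and rot: "\<forall>C \<in> carrier_mat (2 ^ n) (2 ^ n). rot_symmetric (W_loc n C A)"
  shows "\<exists>U \<in> SU_loc n. \<exists>\<Delta> \<in> t_loc n. \<exists>\<phi>::real. \<phi> \<noteq> 0 \<and>
           \<Delta> * conj_by U A - conj_by U A * \<Delta> = (\<i> * of_real \<phi>) \<cdot>\<^sub>m conj_by U A"
proof -
  define N where "N = (2::nat) ^ n"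
  obtain V as where V: "\<And>\<theta>. V \<theta> \<in> SU_loc n" "\<And>\<theta>. length (as \<theta>) = n"
    "\<And>\<theta>. \<forall>a\<in>set (as \<theta>). \<bar>a\<bar> \<le> pi"
    "\<And>\<theta> k l. k < N \<Longrightarrow> l < N \<Longrightarrow> conj_by (V \<theta>) A $$ (k, l) \<noteq> 0 \<Longrightarrow>
       cis (local_phase (as \<theta>) k - local_phase (as \<theta>) l) = cis \<theta>"
    using rot_symmetric_imp_local_phases[OF A rot] unfolding N_def by metis
  have bound: "\<bar>local_phase (as \<theta>) k\<bar> \<le> n * pi" for \<theta> k
    using abs_local_phase_le[OF V(3)] V(2) by metis
  obtain \<theta>\<^sub>1 \<theta>\<^sub>2 where "\<theta>\<^sub>1 \<noteq> \<theta>\<^sub>2" and offsets: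
    "\<forall>k<N. \<forall>l<N. conj_by (V \<theta>\<^sub>1) A $$ (k, l) \<noteq> 0 \<longrightarrow>
       (local_phase (as \<theta>\<^sub>1) k - local_phase (as \<theta>\<^sub>2) k) - (local_phase (as \<theta>\<^sub>1) l - local_phase (as \<theta>\<^sub>2) l)
       = \<theta>\<^sub>1 - \<theta>\<^sub>2"
    by (rule phase_pigeonhole[where ph = "\<lambda>\<theta>. local_phase (as \<theta>)" and c = "n * pi" and N = N
          and S = "\<lambda>\<theta> k l. conj_by (V \<theta>) A $$ (k, l) \<noteq> 0", OF bound V(4)])
  define d where "d = map2 (-) (as \<theta>\<^sub>1) (as \<theta>\<^sub>2)"
  have d: "length d = n" "local_phase d k = local_phase (as \<theta>\<^sub>1) k - local_phase (as \<theta>\<^sub>2) k" for k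
    unfolding d_def using V(2) by (simp_all add: local_phase_diff)
  define \<Delta> where "\<Delta> = mat_diag N (\<lambda>k. \<i> * of_real (local_phase d k))"
  have "\<Delta> \<in> t_loc n"
    unfolding t_loc_eq \<Delta>_def N_def using d(1) by blast
  moreover have B: "conj_by (V \<theta>\<^sub>1) A \<in> carrier_mat N N"
    using A V(1) SU_loc_carrier unfolding N_def by (blast intro: conj_by_carrier)
  moreover have "\<Delta> * conj_by (V \<theta>\<^sub>1) A - conj_by (V \<theta>\<^sub>1) A * \<Delta>
                 = (\<i> * of_real (\<theta>\<^sub>1 - \<theta>\<^sub>2)) \<cdot>\<^sub>m conj_by (V \<theta>\<^sub>1) A"
    unfolding \<Delta>_def mat_diag_commutator_eq_smult_iff[OF B] d(2) by (rule offsets)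
  ultimately show ?thesis
    using V(1) \<open>\<theta>\<^sub>1 \<noteq> \<theta>\<^sub>2\<close>
    by (intro bexI[of _ "V \<theta>\<^sub>1"] bexI[of _ \<Delta>] exI[of _ "\<theta>\<^sub>1 - \<theta>\<^sub>2"]) auto
qed

theorem corollary3p4:
  fixes n :: nat and A :: "complex mat"
  assumes "A \<in> carrier_mat (2^n) (2^n)"
  shows "(\<forall>C \<in> carrier_mat (2^n) (2^n). rot_symmetric (W_loc n C A)) \<longleftrightarrow>
         (\<exists>U \<in> SU_loc n. \<exists>\<Delta> \<in> t_loc n. \<exists>\<phi>::real. \<phi> \<noteq> 0 \<and>
            \<Delta> * (U * A * adj U) - (U * A * adj U) * \<Delta> = (\<i> * of_real \<phi>) \<cdot>\<^sub>m (U * A * adj U))"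
proof
  assume rot: "\<forall>C \<in> carrier_mat (2^n) (2^n). rot_symmetric (W_loc n C A)"
  then show "\<exists>U \<in> SU_loc n. \<exists>\<Delta> \<in> t_loc n. \<exists>\<phi>::real. \<phi> \<noteq> 0 \<and>
      \<Delta> * (U * A * adj U) - (U * A * adj U) * \<Delta> = (\<i> * of_real \<phi>) \<cdot>\<^sub>m (U * A * adj U)"
    using rot_symmetric_imp_commutator[OF assms rot] by (simp only: conj_by_def)
next
  assume "\<exists>U \<in> SU_loc n. \<exists>\<Delta> \<in> t_loc n. \<exists>\<phi>::real. \<phi> \<noteq> 0 \<and>
      \<Delta> * (U * A * adj U) - (U * A * adj U) * \<Delta> = (\<i> * of_real \<phi>) \<cdot>\<^sub>m (U * A * adj U)"
  then have "\<exists>G \<in> SU_loc n. conj_by G A = cis \<psi> \<cdot>\<^sub>m A" for \<psi>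
    using commutator_imp_phase_orbit[OF assms] unfolding conj_by_def by blast
  then show "\<forall>C \<in> carrier_mat (2^n) (2^n). rot_symmetric (W_loc n C A)"
    using phase_orbit_imp_rot_symmetric[OF assms] by blast
qed

end
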